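(* Let $A\in\mathbb{R}^{n\times n}$ and $B\in\mathbb{R}^{r\times r}$ be symmetric positive semidefinite with $r\le n$, with eigendecompositions $A=\sum_{i=1}^{n}s_{i}u_{i}u_{i}^{T}$, $\sum_{i=1}^{n}u_{i}u_{i}^{T}=I_{n}$, $s_{1}\ge\cdots\ge s_{n}\ge0$, and $B=\sum_{i=1}^{r}d_{i}v_{i}v_{i}^{T}$, $\sum_{i=1}^{r}v_{i}v_{i}^{T}=I_{r}$, $0\le d_{1}\le\cdots\le d_{r}$. Then $$\min_{Y\in\mathbb{R}^{n\times r}}\left\{\|A-YY^{T}\|_{F}^{2}+2\langle B,Y^{T}Y\rangle\right\}=\sum_{i=1}^{n}s_{i}^{2}-\sum_{i=1}^{r}[(s_{i}-d_{i})_{+}]^{2},$$ with a minimizer $Y^{\star}=\sum_{i=1}^{r}u_{i}v_{i}^{T}\sqrt{(s_{i}-d_{i})_{+}}$.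
   Context: $\langle A,B\rangle=\mathrm{tr}(A^{T}B)$ and $x_{+}=\max\{0,x\}$. *)

theory Defs
  imports "HOL-Analysis.Analysis"
begin

definition pos_part :: "real \<Rightarrow> real" where
  "pos_part x = max 0 x"

definition outer :: "real ^ 'm \<Rightarrow> real ^ 'k \<Rightarrow> real ^ 'k ^ 'm" where
  "outer u v = (\<chi> i j. u $ i * v $ j)"

definition frob_inner :: "real ^ 'k ^ 'm \<Rightarrow> real ^ 'k ^ 'm \<Rightarrow> real" where
  "frob_inner A B = trace (transpose A ** B)"

definition frob_norm :: "real ^ 'k ^ 'm \<Rightarrow> real" where
  "frob_norm A = sqrt (\<Sum>i\<in>UNIV. \<Sum>j\<in>UNIV. (A $ i $ j)\<^sup>2)"

definition sym_psd :: "real ^ 'n ^ 'n \<Rightarrow> bool" where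
  "sym_psd A \<longleftrightarrow> transpose A = A \<and> (\<forall>x. 0 \<le> x \<bullet> (A *v x))"

end

theory Submission
  imports Defs
begin

text \<open>
  Diagonalise \<open>Y\<^sup>TY = \<Sum>\<^sub>j \<mu>\<^sub>j w\<^sub>j w\<^sub>j\<^sup>T\<close>. The objective becomes
  \<open>\<Sum>\<^sub>i s\<^sub>i\<^sup>2 + \<Sum>\<^sub>j (\<mu>\<^sub>j\<^sup>2 - 2 \<Sum>\<^sub>i s\<^sub>i p\<^sub>i\<^sub>j + 2 \<mu>\<^sub>j \<Sum>\<^sub>k d\<^sub>k q\<^sub>k\<^sub>j)\<close> with
  \<open>p\<^sub>i\<^sub>j = (u\<^sub>i \<bullet> Y w\<^sub>j)\<^sup>2\<close> and \<open>q\<^sub>k\<^sub>j = (v\<^sub>k \<bullet> w\<^sub>j)\<^sup>2\<close>; by Parseval and Bessel, \<open>p\<^sub>i\<^sub>j/\<mu>\<^sub>j\<close>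
  and \<open>q\<^sub>k\<^sub>j\<close> are probability vectors in \<open>i\<close> resp. \<open>k\<close> and sub-stochastic in \<open>j\<close>.
  As \<open>\<mu>\<^sup>2 - 2\<mu>t \<ge> -(t\<^sub>+)\<^sup>2\<close>, the \<open>j\<close>-th summand is at least minus an average of the costs
  \<open>(s\<^sub>i - d\<^sub>k)\<^sub>+\<^sup>2\<close>, and an explicit dual solution of the assignment problem with this Monge cost
  bounds the total by \<open>-\<Sum>\<^bsub>i<r\<^esub> (s\<^sub>i - d\<^sub>i)\<^sub>+\<^sup>2\<close>. The matrix \<open>Y\<^sup>\<star>\<close> has right singular
  vectors \<open>v\<^sub>j\<close> with \<open>\<mu>\<^sub>j = (s\<^sub>j - d\<^sub>j)\<^sub>+\<close> and attains the bound.
\<close>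

section \<open>The Monge cost \<open>(s - d)\<^sub>+\<^sup>2\<close> and its assignment dual\<close>

lemma pos_part_sq_mono: "x \<le> y \<Longrightarrow> (pos_part x)\<^sup>2 \<le> (pos_part y)\<^sup>2"
  unfolding pos_part_def by (auto intro: power_mono)

lemma pos_part_sq_increment_mono:
  assumes "0 \<le> D" and "a \<le> c"
  shows "(pos_part (a + D))\<^sup>2 - (pos_part a)\<^sup>2 \<le> (pos_part (c + D))\<^sup>2 - (pos_part c)\<^sup>2"
proof -
  have factor: "(pos_part (z + D))\<^sup>2 - (pos_part z)\<^sup>2
      = (pos_part (z + D) - pos_part z) * (pos_part (z + D) + pos_part z)" for z
    by (simp add: power2_eq_square algebra_simps)
  show ?thesis unfolding factor using assms
    by (intro mult_mono) (auto simp: pos_part_def max_def)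
qed

lemma pos_part_sq_diff_mono:
  assumes "e \<le> f" and "x \<le> y"
  shows "(pos_part (x - e))\<^sup>2 - (pos_part (x - f))\<^sup>2 \<le> (pos_part (y - e))\<^sup>2 - (pos_part (y - f))\<^sup>2"
  using pos_part_sq_increment_mono[of "f - e" "x - f" "y - f"] assms by simp

lemma neg_pos_part_sq_le:
  assumes "0 \<le> \<mu>" shows "- (pos_part t)\<^sup>2 \<le> \<mu>\<^sup>2 - 2 * \<mu> * t"
proof (cases "t \<le> 0")
  case True
  then have "\<mu> * t \<le> 0" using assms by (simp add: mult_nonneg_nonpos)
  moreover have "(pos_part t)\<^sup>2 = 0" using True by (simp add: pos_part_def)
  moreover have "0 \<le> \<mu>\<^sup>2" by simp
  ultimately show ?thesis by linarith
next
  case False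
  have "0 \<le> (\<mu> - t)\<^sup>2" by simp
  then show ?thesis using False by (simp add: pos_part_def power2_eq_square algebra_simps)
qed

lemma sum_telescope_Suc: "k \<le> K \<Longrightarrow> (\<Sum>m = k..<K. f m - f (Suc m)) = f k - (f K :: real)"
  by (induction K rule: dec_induct) simp_all

locale sorted_spectra =
  fixes N R :: nat and s d :: "nat \<Rightarrow> real"
  assumes R_le_N: "R \<le> N"
    and s_dec: "\<And>i j. i \<le> j \<Longrightarrow> j < N \<Longrightarrow> s j \<le> s i"
    and s_nonneg: "\<And>i. i < N \<Longrightarrow> 0 \<le> s i"
    and d_inc: "\<And>i j. i \<le> j \<Longrightarrow> j < R \<Longrightarrow> d i \<le> d j"
begin

text \<open>By the Monge property the identity assignment is optimal, so complementary slackness forces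
  \<open>a\<^sub>i + b\<^sub>i = (s\<^sub>i - d\<^sub>i)\<^sub>+\<^sup>2\<close> for \<open>i < R\<close>. Hence \<open>b\<close> telescopes along the diagonal from
  \<open>b\<^sub>R\<^sub>-\<^sub>1 = (s_tail - d\<^sub>R\<^sub>-\<^sub>1)\<^sub>+\<^sup>2\<close>, where \<open>s_tail\<close> is the largest unassigned \<open>s\<^sub>i\<close>
  (or \<open>0\<close> when \<open>R = N\<close>).\<close>

definition s_tail :: real where
  "s_tail = (if R < N then s R else 0)"

definition diagonal_gain :: "nat \<Rightarrow> real" where
  "diagonal_gain m = (pos_part (s (Suc m) - d m))\<^sup>2 - (pos_part (s (Suc m) - d (Suc m)))\<^sup>2"

definition dual_b :: "nat \<Rightarrow> real" where
  "dual_b k = (pos_part (s_tail - d (R - 1)))\<^sup>2 + (\<Sum>m = k..<R - 1. diagonal_gain m)"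

definition dual_a :: "nat \<Rightarrow> real" where
  "dual_a i = (if i < R then (pos_part (s i - d i))\<^sup>2 - dual_b i else 0)"

lemma increment_le_diagonal_gains:
  assumes "k \<le> K" "K < R" "\<And>m. k \<le> m \<Longrightarrow> m < K \<Longrightarrow> x \<le> s (Suc m)"
  shows "(pos_part (x - d k))\<^sup>2 - (pos_part (x - d K))\<^sup>2 \<le> (\<Sum>m = k..<K. diagonal_gain m)"
proof -
  have "(\<Sum>m = k..<K. (pos_part (x - d m))\<^sup>2 - (pos_part (x - d (Suc m)))\<^sup>2)
      \<le> (\<Sum>m = k..<K. diagonal_gain m)"
    unfolding diagonal_gain_def using assms by (intro sum_mono pos_part_sq_diff_mono d_inc) auto
  then show ?thesis using sum_telescope_Suc[OF assms(1), of "\<lambda>m. (pos_part (x - d m))\<^sup>2"] by simp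
qed

lemma diagonal_gains_le_increment:
  assumes "k \<le> K" "K < R" "\<And>m. k \<le> m \<Longrightarrow> m < K \<Longrightarrow> s (Suc m) \<le> x"
  shows "(\<Sum>m = k..<K. diagonal_gain m) \<le> (pos_part (x - d k))\<^sup>2 - (pos_part (x - d K))\<^sup>2"
proof -
  have "(\<Sum>m = k..<K. diagonal_gain m)
      \<le> (\<Sum>m = k..<K. (pos_part (x - d m))\<^sup>2 - (pos_part (x - d (Suc m)))\<^sup>2)"
    unfolding diagonal_gain_def using assms by (intro sum_mono pos_part_sq_diff_mono d_inc) auto
  then show ?thesis using sum_telescope_Suc[OF assms(1), of "\<lambda>m. (pos_part (x - d m))\<^sup>2"] by simp
qed

lemma s_tail_le: "i < R \<Longrightarrow> s_tail \<le> s i"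
  unfolding s_tail_def using s_dec s_nonneg R_le_N by auto

lemma dual_b_ge: "k < R \<Longrightarrow> (pos_part (s_tail - d k))\<^sup>2 \<le> dual_b k"
  using increment_le_diagonal_gains[of k "R - 1" s_tail] s_tail_le unfolding dual_b_def by force

lemma dual_b_nonneg: "k < R \<Longrightarrow> 0 \<le> dual_b k"
  using dual_b_ge zero_le_power2 order_trans by blast

lemma dual_a_nonneg: "0 \<le> dual_a i"
proof (cases "i < R")
  case True
  have "dual_b i \<le> (pos_part (s_tail - d (R - 1)))\<^sup>2 + ((pos_part (s i - d i))\<^sup>2 - (pos_part (s i - d (R - 1)))\<^sup>2)"
    unfolding dual_b_def using True s_dec R_le_N by (intro add_left_mono diagonal_gains_le_increment) auto
  moreover have "(pos_part (s_tail - d (R - 1)))\<^sup>2 \<le> (pos_part (s i - d (R - 1)))\<^sup>2"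
    using s_tail_le[OF True] by (intro pos_part_sq_mono) simp
  ultimately show ?thesis using True unfolding dual_a_def by simp
qed (simp add: dual_a_def)

lemma dual_b_split: "k \<le> i \<Longrightarrow> i < R \<Longrightarrow> dual_b k = dual_b i + (\<Sum>m = k..<i. diagonal_gain m)"
  using sum.atLeastLessThan_concat[of k i "R - 1" diagonal_gain] unfolding dual_b_def by fastforce

lemma dual_feasible:
  assumes "i < N" and "k < R"
  shows "(pos_part (s i - d k))\<^sup>2 \<le> dual_a i + dual_b k"
proof (cases "i < R")
  case True
  show ?thesis
  proof (cases "k \<le> i")
    case True
    have "(pos_part (s i - d k))\<^sup>2 - (pos_part (s i - d i))\<^sup>2 \<le> (\<Sum>m = k..<i. diagonal_gain m)"
      using True \<open>i < R\<close> assms by (intro increment_le_diagonal_gains s_dec) auto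
    then show ?thesis using dual_b_split[OF True \<open>i < R\<close>] \<open>i < R\<close> unfolding dual_a_def by simp
  next
    case False
    have "(\<Sum>m = i..<k. diagonal_gain m) \<le> (pos_part (s i - d i))\<^sup>2 - (pos_part (s i - d k))\<^sup>2"
      using False assms R_le_N by (intro diagonal_gains_le_increment s_dec) auto
    then show ?thesis using dual_b_split[of i k] False assms \<open>i < R\<close> unfolding dual_a_def by simp
  qed
next
  case False
  then have "(pos_part (s i - d k))\<^sup>2 \<le> (pos_part (s_tail - d k))\<^sup>2"
    using assms s_dec unfolding s_tail_def by (intro pos_part_sq_mono) auto
  then show ?thesis using dual_b_ge[OF \<open>k < R\<close>] False unfolding dual_a_def by simp
qed

lemma dual_value: "(\<Sum>i<N. dual_a i) + (\<Sum>k<R. dual_b k) = (\<Sum>i<R. (pos_part (s i - d i))\<^sup>2)"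
proof -
  have "(\<Sum>i<N. dual_a i) = (\<Sum>i<R. dual_a i)"
    using R_le_N by (intro sum.mono_neutral_right) (auto simp: dual_a_def)
  also have "\<dots> = (\<Sum>i<R. (pos_part (s i - d i))\<^sup>2) - (\<Sum>i<R. dual_b i)"
    by (simp add: dual_a_def sum_subtractf)
  finally show ?thesis by simp
qed

lemma dual_certificate:
  obtains a b where "\<And>i. 0 \<le> a i" and "\<And>k. k < R \<Longrightarrow> 0 \<le> b k"
    and "\<And>i k. i < N \<Longrightarrow> k < R \<Longrightarrow> (pos_part (s i - d k))\<^sup>2 \<le> a i + b k"
    and "(\<Sum>i<N. a i) + (\<Sum>k<R. b k) = (\<Sum>i<R. (pos_part (s i - d i))\<^sup>2)"
  using dual_a_nonneg dual_b_nonneg dual_feasible dual_value by blast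

end

section \<open>Weak duality along the eigen-directions of \<open>Y\<^sup>TY\<close>\<close>

lemma sum_product_weights_add:
  fixes \<alpha> \<beta> f g :: "nat \<Rightarrow> real"
  assumes "(\<Sum>i<N. \<alpha> i) = 1" and "(\<Sum>k<R. \<beta> k) = 1"
  shows "(\<Sum>i<N. \<Sum>k<R. \<alpha> i * \<beta> k * (f i + g k)) = (\<Sum>i<N. \<alpha> i * f i) + (\<Sum>k<R. \<beta> k * g k)"
proof -
  have "(\<Sum>i<N. \<Sum>k<R. \<alpha> i * \<beta> k * (f i + g k))
      = (\<Sum>i<N. \<alpha> i * f i * (\<Sum>k<R. \<beta> k)) + (\<Sum>k<R. \<beta> k * g k * (\<Sum>i<N. \<alpha> i))"
    by (simp add: distrib_left sum.distrib sum_distrib_left sum_distrib_right mult_ac sum.swap[of _ "{..<R}"])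
  then show ?thesis using assms by simp
qed

lemma eigendirection_lower_bound:
  fixes \<mu> :: real and p q a b s d :: "nat \<Rightarrow> real"
  assumes \<mu>: "0 \<le> \<mu>" and p: "\<And>i. 0 \<le> p i" and q: "\<And>k. 0 \<le> q k"
    and p_sum: "(\<Sum>i<N. p i) = \<mu>" and q_sum: "(\<Sum>k<R. q k) = 1"
    and b: "\<And>k. k < R \<Longrightarrow> 0 \<le> b k"
    and ab: "\<And>i k. i < N \<Longrightarrow> k < R \<Longrightarrow> (pos_part (s i - d k))\<^sup>2 \<le> a i + b k"
  shows "- (\<Sum>i<N. p i / \<mu> * a i) - (\<Sum>k<R. q k * b k)
    \<le> \<mu>\<^sup>2 - 2 * (\<Sum>i<N. s i * p i) + 2 * \<mu> * (\<Sum>k<R. d k * q k)"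
proof (cases "\<mu> = 0")
  case True
  then have "\<forall>i\<in>{..<N}. p i = 0" using p_sum p by (subst sum_nonneg_eq_0_iff[symmetric]) auto
  moreover have "0 \<le> (\<Sum>k<R. q k * b k)" using q b by (intro sum_nonneg) auto
  ultimately show ?thesis using True by simp
next
  case False
  define \<alpha> where "\<alpha> i = p i / \<mu>" for i
  have \<alpha>_sum: "(\<Sum>i<N. \<alpha> i) = 1"
    using p_sum False unfolding \<alpha>_def by (simp add: sum_divide_distrib[symmetric])
  have "(\<Sum>i<N. \<alpha> i * (\<mu>\<^sup>2 - 2 * \<mu> * s i)) = (\<Sum>i<N. \<alpha> i) * \<mu>\<^sup>2 - 2 * (\<Sum>i<N. s i * (\<alpha> i * \<mu>))"
    by (simp add: right_diff_distrib sum_subtractf sum_distrib_left sum_distrib_right mult_ac)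
  also have "\<dots> = \<mu>\<^sup>2 - 2 * (\<Sum>i<N. s i * p i)"
    using \<alpha>_sum False by (simp add: \<alpha>_def)
  finally have "\<mu>\<^sup>2 - 2 * (\<Sum>i<N. s i * p i) = (\<Sum>i<N. \<alpha> i * (\<mu>\<^sup>2 - 2 * \<mu> * s i))" ..
  moreover have "2 * \<mu> * (\<Sum>k<R. d k * q k) = (\<Sum>k<R. q k * (2 * \<mu> * d k))"
    by (simp add: sum_distrib_left mult_ac)
  ultimately have "\<mu>\<^sup>2 - 2 * (\<Sum>i<N. s i * p i) + 2 * \<mu> * (\<Sum>k<R. d k * q k)
      = (\<Sum>i<N. \<Sum>k<R. \<alpha> i * q k * ((\<mu>\<^sup>2 - 2 * \<mu> * s i) + 2 * \<mu> * d k))"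
    using sum_product_weights_add[OF \<alpha>_sum q_sum] by simp
  moreover have "(\<Sum>i<N. \<Sum>k<R. \<alpha> i * q k * (- a i + - b k))
      \<le> (\<Sum>i<N. \<Sum>k<R. \<alpha> i * q k * ((\<mu>\<^sup>2 - 2 * \<mu> * s i) + 2 * \<mu> * d k))"
  proof (intro sum_mono mult_left_mono)
    fix i k assume "i \<in> {..<N}" "k \<in> {..<R}"
    then show "- a i + - b k \<le> \<mu>\<^sup>2 - 2 * \<mu> * s i + 2 * \<mu> * d k"
      using ab[of i k] neg_pos_part_sq_le[OF \<mu>, of "s i - d k"] by (simp add: algebra_simps)
  qed (use p q \<mu> in \<open>auto simp: \<alpha>_def\<close>)
  moreover have "(\<Sum>i<N. \<Sum>k<R. \<alpha> i * q k * (- a i + - b k))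
      = - (\<Sum>i<N. p i / \<mu> * a i) - (\<Sum>k<R. q k * b k)"
    using sum_product_weights_add[OF \<alpha>_sum q_sum, of "\<lambda>i. - a i" "\<lambda>k. - b k"]
    by (simp add: \<alpha>_def sum_negf)
  ultimately show ?thesis by simp
qed

lemma assignment_lower_bound:
  fixes \<mu> :: "nat \<Rightarrow> real" and p q :: "nat \<Rightarrow> nat \<Rightarrow> real" and a b s d :: "nat \<Rightarrow> real"
  assumes \<mu>: "\<And>j. j < R \<Longrightarrow> 0 \<le> \<mu> j" and p: "\<And>i j. 0 \<le> p i j" and q: "\<And>k j. 0 \<le> q k j"
    and p_col: "\<And>j. j < R \<Longrightarrow> (\<Sum>i<N. p i j) = \<mu> j"
    and p_row: "\<And>i. i < N \<Longrightarrow> (\<Sum>j<R. p i j / \<mu> j) \<le> 1"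
    and q_col: "\<And>j. j < R \<Longrightarrow> (\<Sum>k<R. q k j) = 1"
    and q_row: "\<And>k. k < R \<Longrightarrow> (\<Sum>j<R. q k j) \<le> 1"
    and a: "\<And>i. 0 \<le> a i" and b: "\<And>k. k < R \<Longrightarrow> 0 \<le> b k"
    and ab: "\<And>i k. i < N \<Longrightarrow> k < R \<Longrightarrow> (pos_part (s i - d k))\<^sup>2 \<le> a i + b k"
  shows "- ((\<Sum>i<N. a i) + (\<Sum>k<R. b k))
    \<le> (\<Sum>j<R. (\<mu> j)\<^sup>2 - 2 * (\<Sum>i<N. s i * p i j) + 2 * \<mu> j * (\<Sum>k<R. d k * q k j))"
proof -
  have "(\<Sum>j<R. - (\<Sum>i<N. p i j / \<mu> j * a i) - (\<Sum>k<R. q k j * b k))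
      \<le> (\<Sum>j<R. (\<mu> j)\<^sup>2 - 2 * (\<Sum>i<N. s i * p i j) + 2 * \<mu> j * (\<Sum>k<R. d k * q k j))"
    using \<mu> p q p_col q_col b ab by (intro sum_mono eigendirection_lower_bound) auto
  moreover have "(\<Sum>j<R. - (\<Sum>i<N. p i j / \<mu> j * a i) - (\<Sum>k<R. q k j * b k))
      = - (\<Sum>i<N. a i * (\<Sum>j<R. p i j / \<mu> j)) - (\<Sum>k<R. b k * (\<Sum>j<R. q k j))"
  proof -
    have "(\<Sum>j<R. \<Sum>i<N. p i j / \<mu> j * a i) = (\<Sum>i<N. a i * (\<Sum>j<R. p i j / \<mu> j))"
      by (subst sum.swap) (simp add: sum_distrib_left mult.commute)
    moreover have "(\<Sum>j<R. \<Sum>k<R. q k j * b k) = (\<Sum>k<R. b k * (\<Sum>j<R. q k j))"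
      by (subst sum.swap) (simp add: sum_distrib_left mult.commute)
    ultimately show ?thesis by (simp add: sum_subtractf sum_negf)
  qed
  moreover have "(\<Sum>i<N. a i * (\<Sum>j<R. p i j / \<mu> j)) \<le> (\<Sum>i<N. a i)"
    using p_row a by (intro sum_mono) (simp add: mult_left_le)
  moreover have "(\<Sum>k<R. b k * (\<Sum>j<R. q k j)) \<le> (\<Sum>k<R. b k)"
    using q_row b by (intro sum_mono) (simp add: mult_left_le)
  ultimately show ?thesis by linarith
qed

lemma frob_inner_eq_inner: "frob_inner X Y = X \<bullet> Y"
  unfolding frob_inner_def trace_def matrix_matrix_mult_def transpose_def inner_vec_def
  by (simp, subst sum.swap, simp)

lemma frob_norm_eq_norm: "frob_norm X = norm X"
  unfolding frob_norm_def norm_eq_sqrt_inner inner_vec_def by (simp add: power2_eq_square)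

lemma outer_mult_vector: "outer a b *v x = (b \<bullet> x) *\<^sub>R a"
  unfolding outer_def matrix_vector_mult_def inner_vec_def
  by (simp add: vec_eq_iff sum_distrib_left sum_distrib_right mult_ac)

lemma sum_matrix_vector_mult: "(\<Sum>i\<in>I. X i) *v (x :: real^'b) = (\<Sum>i\<in>I. X i *v x)"
  by (induct I rule: infinite_finite_induct) (auto simp: matrix_vector_mult_add_rdistrib)

lemma matrix_vector_mult_sum: "X *v (\<Sum>i\<in>I. f i) = (\<Sum>i\<in>I. X *v (f i :: real^'b))"
  by (induct I rule: infinite_finite_induct) (auto simp: matrix_vector_right_distrib)

lemma weighted_outer_sum_mult_vector:
  "(\<Sum>i\<in>I. c i *\<^sub>R outer (a i) (b i)) *v x = (\<Sum>i\<in>I. (c i * (b i \<bullet> x)) *\<^sub>R a i)"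
  by (simp add: sum_matrix_vector_mult scaleR_matrix_vector_assoc[symmetric] outer_mult_vector)

lemma inner_weighted_outer_sum_quadratic:
  "x \<bullet> ((\<Sum>i\<in>I. c i *\<^sub>R outer (a i) (a i)) *v x) = (\<Sum>i\<in>I. c i * (a i \<bullet> x)\<^sup>2)"
  by (simp add: weighted_outer_sum_mult_vector inner_sum_right power2_eq_square inner_commute mult_ac)

lemma inner_outer: "X \<bullet> outer a b = a \<bullet> (X *v b)"
  unfolding outer_def inner_vec_def matrix_vector_mult_def
  by (simp add: sum_distrib_left mult_ac)

lemma inner_weighted_outer_sum:
  "X \<bullet> (\<Sum>i\<in>I. c i *\<^sub>R outer (a i) (a i)) = (\<Sum>i\<in>I. c i * (a i \<bullet> (X *v a i)))"
  by (simp add: inner_sum_right inner_outer)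

lemma inner_transpose_mult_vector: "a \<bullet> (transpose Y *v b) = (Y *v a) \<bullet> (b :: real^'m)"
  by (metis dot_lmul_matrix inner_commute transpose_matrix_vector)

lemma inner_gram_mult_vector: "a \<bullet> ((transpose Y ** Y) *v b) = (Y *v a) \<bullet> (Y *v (b :: real^'n))"
  by (simp only: matrix_vector_mul_assoc[symmetric] inner_transpose_mult_vector)

lemma inner_symmetric_mult_vector:
  fixes M :: "real^'n^'n"
  shows "transpose M = M \<Longrightarrow> a \<bullet> (M *v b) = (M *v a) \<bullet> b"
  by (metis inner_transpose_mult_vector)

lemma inner_gram_self:
  fixes Y :: "real^'r^'n"
  shows "(Y ** transpose Y) \<bullet> (Y ** transpose Y) = (transpose Y ** Y) \<bullet> (transpose Y ** Y)"
proof -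
  have "(Y ** transpose Y) \<bullet> (Y ** transpose Y) = trace (Y ** (transpose Y ** Y ** transpose Y))"
    unfolding frob_inner_eq_inner[symmetric] frob_inner_def
    by (simp add: matrix_transpose_mul matrix_mul_assoc)
  also have "\<dots> = trace ((transpose Y ** Y ** transpose Y) ** Y)" by (rule trace_mul_sym)
  also have "\<dots> = (transpose Y ** Y) \<bullet> (transpose Y ** Y)"
    unfolding frob_inner_eq_inner[symmetric] frob_inner_def
    by (simp add: matrix_transpose_mul matrix_mul_assoc)
  finally show ?thesis .
qed

lemma transpose_outer: "transpose (outer a b) = outer b a"
  by (simp add: outer_def transpose_def vec_eq_iff)

lemma transpose_sum: "transpose (\<Sum>i\<in>I. X i) = (\<Sum>i\<in>I. transpose (X i))"
  by (induct I rule: infinite_finite_induct) (auto simp: transpose_def vec_eq_iff)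

lemma trace_sum: "trace (\<Sum>i\<in>I. X i) = (\<Sum>i\<in>I. trace (X i))"
  unfolding trace_def by (simp add: sum_component, subst sum.swap, simp)

lemma trace_outer_self: "trace (outer a a) = a \<bullet> a"
  by (simp add: trace_def outer_def inner_vec_def)

section \<open>Orthonormal sequences and the spectral theorem\<close>

definition orthonormal_seq :: "(nat \<Rightarrow> 'a::real_inner) \<Rightarrow> nat \<Rightarrow> bool" where
  "orthonormal_seq w k \<longleftrightarrow> (\<forall>i<k. \<forall>l<k. w i \<bullet> w l = (if i = l then 1 else 0))"

lemma orthonormal_seqD: "orthonormal_seq w k \<Longrightarrow> i < k \<Longrightarrow> l < k \<Longrightarrow> w i \<bullet> w l = (if i = l then 1 else 0)"
  unfolding orthonormal_seq_def by blast

lemma resolution_of_identity_expansion: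
  fixes u :: "nat \<Rightarrow> real^'a"
  assumes "(\<Sum>i<K. outer (u i) (u i)) = mat 1"
  shows "x = (\<Sum>i<K. (u i \<bullet> x) *\<^sub>R u i)"
proof -
  have "x = (\<Sum>i<K. outer (u i) (u i)) *v x" using assms by simp
  then show ?thesis by (simp add: sum_matrix_vector_mult outer_mult_vector)
qed

lemma resolution_of_identity_parseval:
  fixes u :: "nat \<Rightarrow> real^'a"
  assumes "(\<Sum>i<K. outer (u i) (u i)) = mat 1"
  shows "x \<bullet> x = (\<Sum>i<K. (u i \<bullet> x)\<^sup>2)"
proof -
  have "x \<bullet> x = x \<bullet> (\<Sum>i<K. (u i \<bullet> x) *\<^sub>R u i)"
    using resolution_of_identity_expansion[OF assms] by metis
  then show ?thesis by (simp add: inner_sum_right power2_eq_square inner_commute)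
qed

text \<open>Taking traces, \<open>\<Sum> |u\<^sub>i|\<^sup>2 = dim\<close>; Parseval gives \<open>|u\<^sub>l|\<^sup>4 \<le> |u\<^sub>l|\<^sup>2\<close>, so every \<open>|u\<^sub>l| = 1\<close>,
  and then Parseval for \<open>u\<^sub>l\<close> leaves no room for \<open>u\<^sub>i \<bullet> u\<^sub>l \<noteq> 0\<close>.\<close>
lemma resolution_of_identity_orthonormal:
  fixes u :: "nat \<Rightarrow> real^'a"
  assumes u: "(\<Sum>i<CARD('a). outer (u i) (u i)) = mat 1"
  shows "orthonormal_seq u CARD('a)"
proof -
  define K where "K = CARD('a)"
  have parseval: "u l \<bullet> u l = (\<Sum>i<K. (u i \<bullet> u l)\<^sup>2)" for l
    using resolution_of_identity_parseval[OF u] unfolding K_def by blast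
  have trace: "(\<Sum>i<K. u i \<bullet> u i) = real K"
    using arg_cong[OF u, of trace] unfolding K_def by (simp add: trace_sum trace_outer_self trace_I)
  have le1: "u l \<bullet> u l \<le> 1" if "l < K" for l
  proof -
    have "(u l \<bullet> u l)\<^sup>2 \<le> (\<Sum>i<K. (u i \<bullet> u l)\<^sup>2)"
      using that by (intro member_le_sum[where f = "\<lambda>i. (u i \<bullet> u l)\<^sup>2"]) auto
    also have "\<dots> = u l \<bullet> u l" by (rule parseval[symmetric])
    finally have "(u l \<bullet> u l)\<^sup>2 \<le> u l \<bullet> u l" .
    then show ?thesis by (cases "u l \<bullet> u l = 0") (auto simp: power2_eq_square)
  qed
  have unit: "u l \<bullet> u l = 1" if "l < K" for l
  proof (rule ccontr)
    assume "u l \<bullet> u l \<noteq> 1"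
    then have "(\<Sum>i<K. u i \<bullet> u i) < (\<Sum>i<K. 1)"
      using le1 that by (intro sum_strict_mono_ex1) (auto simp: order_less_le)
    then show False using trace by simp
  qed
  have orth: "u i \<bullet> u l = 0" if "i < K" "l < K" "i \<noteq> l" for i l
  proof -
    have "(\<Sum>j<K. (u j \<bullet> u l)\<^sup>2) = (u l \<bullet> u l)\<^sup>2 + (\<Sum>j\<in>{..<K} - {l}. (u j \<bullet> u l)\<^sup>2)"
      using that by (intro sum.remove) auto
    then have "(\<Sum>j\<in>{..<K} - {l}. (u j \<bullet> u l)\<^sup>2) = 0"
      using parseval[of l] unit[OF that(2)] by simp
    then show ?thesis using that by (subst (asm) sum_nonneg_eq_0_iff) auto
  qed
  show ?thesis unfolding orthonormal_seq_def K_def[symmetric] using unit orth by simp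
qed

lemma orthonormal_seq_resolution_of_identity:
  fixes w :: "nat \<Rightarrow> real^'a"
  assumes w: "orthonormal_seq w CARD('a)"
  shows "(\<Sum>j<CARD('a). outer (w j) (w j)) = mat 1"
proof -
  define K where "K = CARD('a)"
  define S where "S = w ` {..<K}"
  have wK: "orthonormal_seq w K" using w unfolding K_def .
  have inj: "inj_on w {..<K}"
    using orthonormal_seqD[OF wK] by (intro inj_onI) (metis lessThan_iff zero_neq_one)
  have "pairwise orthogonal S" "0 \<notin> S"
    using orthonormal_seqD[OF wK] unfolding S_def pairwise_def orthogonal_def by force+
  then have "independent S" by (rule pairwise_orthogonal_independent)
  moreover have "dim (UNIV :: (real^'a) set) \<le> card S"
    using inj unfolding S_def K_def by (simp add: card_image)
  ultimately have span: "x \<in> span S" for x using card_ge_dim_independent[of S UNIV] by blast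
  have "x = (\<Sum>j<K. (w j \<bullet> x) *\<^sub>R w j)" for x
  proof -
    define z where "z = x - (\<Sum>j<K. (w j \<bullet> x) *\<^sub>R w j)"
    have z_orth: "w l \<bullet> z = 0" if "l < K" for l
    proof -
      have "w l \<bullet> (\<Sum>j<K. (w j \<bullet> x) *\<^sub>R w j) = (\<Sum>j<K. if j = l then w l \<bullet> x else 0)"
        unfolding inner_sum_right using orthonormal_seqD[OF wK that] by (intro sum.cong) auto
      then show ?thesis using that unfolding z_def by (simp add: inner_diff_right)
    qed
    have "orthogonal z y" if "y \<in> S" for y
      using that z_orth unfolding S_def orthogonal_def by (auto simp: inner_commute)
    then have "z \<bullet> z = 0" using orthogonal_to_span[OF span[of z]] unfolding orthogonal_def by blast
    then show ?thesis unfolding z_def by simp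
  qed
  then show ?thesis
    unfolding matrix_eq K_def[symmetric] by (simp add: sum_matrix_vector_mult outer_mult_vector)
qed

lemma quadratic_nonpos_imp_linear_zero:
  fixes a b :: real
  assumes nonpos: "\<And>t. 2 * t * a + t\<^sup>2 * b \<le> 0"
  shows "a = 0"
proof -
  define c where "c = 1 + \<bar>b\<bar>"
  have "0 < c" unfolding c_def by simp
  then have "c\<^sup>2 * (2 * (a / c) * a + (a / c)\<^sup>2 * b) = a\<^sup>2 * (2 * c + b)"
    by (simp add: field_simps power2_eq_square)
  moreover have "c\<^sup>2 * (2 * (a / c) * a + (a / c)\<^sup>2 * b) \<le> 0"
    using nonpos[of "a / c"] by (simp add: mult_nonneg_nonpos)
  moreover have "a\<^sup>2 * 2 \<le> a\<^sup>2 * (2 * c + b)"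
    unfolding c_def by (intro mult_left_mono) auto
  ultimately have "a\<^sup>2 * 2 \<le> 0" by linarith
  then show ?thesis by simp
qed

text \<open>Along \<open>x + t y\<close> the maximality of \<open>x\<close> gives a quadratic in \<open>t\<close> that is \<open>\<le> 0\<close> and
  vanishes at \<open>t = 0\<close>, so its linear coefficient vanishes.\<close>
lemma rayleigh_maximiser_stationary:
  fixes M :: "real^'a^'a"
  assumes sym: "transpose M = M" and W: "subspace W" and x: "x \<in> W" "x \<bullet> x = 1"
    and max: "\<And>y. y \<in> W \<Longrightarrow> y \<bullet> (M *v y) \<le> (x \<bullet> (M *v x)) * (y \<bullet> y)"
    and y: "y \<in> W"
  shows "y \<bullet> (M *v x - (x \<bullet> (M *v x)) *\<^sub>R x) = 0"
proof -
  define \<rho> where "\<rho> = x \<bullet> (M *v x)"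
  have "2 * t * (y \<bullet> (M *v x) - \<rho> * (x \<bullet> y)) + t\<^sup>2 * (y \<bullet> (M *v y) - \<rho> * (y \<bullet> y)) \<le> 0" for t
  proof -
    have "x + t *\<^sub>R y \<in> W" using W x y by (simp add: subspace_add subspace_scale)
    from max[OF this] have "(x + t *\<^sub>R y) \<bullet> (M *v (x + t *\<^sub>R y)) \<le> \<rho> * ((x + t *\<^sub>R y) \<bullet> (x + t *\<^sub>R y))"
      unfolding \<rho>_def .
    moreover have "x \<bullet> (M *v y) = y \<bullet> (M *v x)"
      using inner_symmetric_mult_vector[OF sym, of x y] by (simp add: inner_commute)
    ultimately show ?thesis using x(2) unfolding \<rho>_def
      by (simp add: matrix_vector_right_distrib matrix_vector_mult_scaleR inner_add_left
          inner_add_right inner_commute power2_eq_square algebra_simps)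
  qed
  then have "y \<bullet> (M *v x) - \<rho> * (x \<bullet> y) = 0" by (rule quadratic_nonpos_imp_linear_zero)
  then show ?thesis unfolding \<rho>_def by (simp add: inner_diff_right inner_commute)
qed

lemma rayleigh_maximiser_exists:
  fixes M :: "real^'a^'a"
  assumes W: "subspace W" and z: "z \<in> W" "z \<noteq> 0"
  obtains x where "x \<in> W" "x \<bullet> x = 1" "\<And>y. y \<in> W \<Longrightarrow> y \<bullet> (M *v y) \<le> (x \<bullet> (M *v x)) * (y \<bullet> y)"
proof -
  define S where "S = sphere 0 1 \<inter> W"
  have "z /\<^sub>R norm z \<in> S"
    using z W unfolding S_def by (simp add: subspace_scale)
  then have "S \<noteq> {}" by blast
  moreover have "compact S"
    unfolding S_def using W by (intro compact_Int_closed compact_sphere closed_subspace)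
  moreover have "continuous_on S (\<lambda>x. x \<bullet> (M *v x))"
    by (intro continuous_on_inner continuous_on_id matrix_vector_mult_linear_continuous_on)
  ultimately obtain x where xS: "x \<in> S" and x_max: "\<And>y. y \<in> S \<Longrightarrow> y \<bullet> (M *v y) \<le> x \<bullet> (M *v x)"
    using continuous_attains_sup by metis
  have "y \<bullet> (M *v y) \<le> (x \<bullet> (M *v x)) * (y \<bullet> y)" if "y \<in> W" for y
  proof (cases "y = 0")
    case False
    then have "y /\<^sub>R norm y \<in> S" using that W unfolding S_def by (simp add: subspace_scale)
    then have "(y /\<^sub>R norm y) \<bullet> (M *v (y /\<^sub>R norm y)) \<le> x \<bullet> (M *v x)" by (rule x_max)
    then have "(y \<bullet> (M *v y)) / (norm y)\<^sup>2 \<le> x \<bullet> (M *v x)"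
      by (simp add: matrix_vector_mult_scaleR power2_eq_square divide_inverse mult_ac)
    then show ?thesis using False by (simp add: divide_le_eq power2_norm_eq_inner)
  qed simp
  moreover have "x \<in> W" "x \<bullet> x = 1" using xS unfolding S_def by (auto simp: norm_eq_1)
  ultimately show ?thesis using that by blast
qed

lemma symmetric_eigenvector_orthogonal_exists:
  fixes M :: "real^'a^'a" and w :: "nat \<Rightarrow> real^'a"
  assumes sym: "transpose M = M" and w: "orthonormal_seq w k" and k: "k < CARD('a)"
    and eig: "\<And>j. j < k \<Longrightarrow> M *v w j = \<mu> j *\<^sub>R w j"
  obtains x \<rho> where "x \<bullet> x = 1" "\<And>j. j < k \<Longrightarrow> w j \<bullet> x = 0" "M *v x = \<rho> *\<^sub>R x"
proof -
  define W where "W = {x. \<forall>j<k. w j \<bullet> x = 0}"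
  have W: "subspace W"
    unfolding W_def subspace_def by (auto simp: inner_add_right)
  have "dim (w ` {..<k}) < DIM(real^'a)"
    using dim_le_card'[of "w ` {..<k}"] card_image_le[of "{..<k}" w] k by simp
  then obtain z where "z \<noteq> 0" and z_orth: "\<And>y. y \<in> span (w ` {..<k}) \<Longrightarrow> orthogonal z y"
    using orthogonal_to_subspace_exists by blast
  moreover have "w j \<bullet> z = 0" if "j < k" for j
    using z_orth[OF span_base, of "w j"] that by (simp add: orthogonal_def inner_commute)
  then have "z \<in> W" unfolding W_def by simp
  ultimately obtain x where x: "x \<in> W" "x \<bullet> x = 1"
    and rayleigh: "\<And>y. y \<in> W \<Longrightarrow> y \<bullet> (M *v y) \<le> (x \<bullet> (M *v x)) * (y \<bullet> y)"
    using rayleigh_maximiser_exists[OF W] by blast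
  define r where "r = M *v x - (x \<bullet> (M *v x)) *\<^sub>R x"
  have "w j \<bullet> r = 0" if "j < k" for j
  proof -
    have "w j \<bullet> (M *v x) = \<mu> j * (w j \<bullet> x)"
      using inner_symmetric_mult_vector[OF sym] eig[OF that] by simp
    then show ?thesis using x that unfolding W_def r_def by (simp add: inner_diff_right)
  qed
  then have "r \<in> W" unfolding W_def by simp
  then have "r \<bullet> r = 0"
    using rayleigh_maximiser_stationary[OF sym W x rayleigh] unfolding r_def by blast
  then have "M *v x = (x \<bullet> (M *v x)) *\<^sub>R x" unfolding r_def by simp
  then show ?thesis using that x unfolding W_def by blast
qed

lemma symmetric_orthonormal_eigenvectors:
  fixes M :: "real^'a^'a"
  assumes sym: "transpose M = M"
  shows "k \<le> CARD('a) \<Longrightarrow> \<exists>w \<mu>. orthonormal_seq w k \<and> (\<forall>j<k. M *v w j = \<mu> j *\<^sub>R w j)"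
proof (induction k)
  case 0
  then show ?case by (auto simp: orthonormal_seq_def)
next
  case (Suc k)
  then obtain w \<mu> where w: "orthonormal_seq w k" and eig: "\<forall>j<k. M *v w j = \<mu> j *\<^sub>R w j" by auto
  obtain x \<rho> where x: "x \<bullet> x = 1" "\<And>j. j < k \<Longrightarrow> w j \<bullet> x = 0" "M *v x = \<rho> *\<^sub>R x"
    using symmetric_eigenvector_orthogonal_exists[OF sym w, of \<mu>] eig Suc.prems by auto
  have "orthonormal_seq (w(k := x)) (Suc k)"
    using w x unfolding orthonormal_seq_def by (auto simp: less_Suc_eq inner_commute)
  moreover have "\<forall>j<Suc k. M *v (w(k := x)) j = (\<mu>(k := \<rho>)) j *\<^sub>R (w(k := x)) j"
    using eig x by (auto simp: less_Suc_eq)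
  ultimately show ?case by blast
qed

lemma symmetric_spectral_decomposition:
  fixes M :: "real^'a^'a"
  assumes "transpose M = M"
  obtains w \<mu> where "orthonormal_seq w CARD('a)" "(\<Sum>j<CARD('a). outer (w j) (w j)) = mat 1"
    "\<And>j. j < CARD('a) \<Longrightarrow> M *v w j = \<mu> j *\<^sub>R w j"
  using symmetric_orthonormal_eigenvectors[OF assms order.refl] orthonormal_seq_resolution_of_identity
  by metis

text \<open>Zero vectors \<open>f\<^sub>j\<close> are allowed: their terms vanish because \<open>x / 0 = 0\<close>.\<close>
lemma bessel_inequality:
  fixes f :: "nat \<Rightarrow> 'a::real_inner"
  assumes orth: "\<And>j l. j < R \<Longrightarrow> l < R \<Longrightarrow> j \<noteq> l \<Longrightarrow> f j \<bullet> f l = 0"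
  shows "(\<Sum>j<R. (x \<bullet> f j)\<^sup>2 / (f j \<bullet> f j)) \<le> x \<bullet> x"
proof -
  define c where "c j = (x \<bullet> f j) / (f j \<bullet> f j)" for j
  define y where "y = (\<Sum>j<R. c j *\<^sub>R f j)"
  define \<sigma> where "\<sigma> = (\<Sum>j<R. (x \<bullet> f j)\<^sup>2 / (f j \<bullet> f j))"
  have xy: "x \<bullet> y = \<sigma>"
    unfolding y_def \<sigma>_def c_def by (simp add: inner_sum_right power2_eq_square mult.commute)
  have fy: "f j \<bullet> y = c j * (f j \<bullet> f j)" if "j < R" for j
  proof -
    have "f j \<bullet> y = (\<Sum>l<R. if l = j then c j * (f j \<bullet> f j) else 0)"
      unfolding y_def inner_sum_right using orth that by (intro sum.cong) auto
    then show ?thesis using that by simp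
  qed
  have yy: "y \<bullet> y = \<sigma>"
  proof -
    have "y \<bullet> y = (\<Sum>j<R. c j * (f j \<bullet> y))" unfolding y_def by (simp add: inner_sum_left)
    also have "\<dots> = \<sigma>"
      unfolding \<sigma>_def using fy
      by (intro sum.cong) (auto simp: c_def power2_eq_square field_simps)
    finally show ?thesis .
  qed
  have "0 \<le> (x - y) \<bullet> (x - y)" by simp
  also have "\<dots> = x \<bullet> x - 2 * (x \<bullet> y) + y \<bullet> y"
    by (simp add: inner_diff_left inner_diff_right inner_commute)
  finally show ?thesis using xy yy unfolding \<sigma>_def by simp
qed

lemma orthonormal_seq_mono: "orthonormal_seq w K \<Longrightarrow> k \<le> K \<Longrightarrow> orthonormal_seq w k"
  unfolding orthonormal_seq_def by simp

lemma weighted_outer_sum_mult_orthonormal: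
  fixes a :: "nat \<Rightarrow> real^'m" and b :: "nat \<Rightarrow> real^'k"
  assumes b: "orthonormal_seq b K" and j: "j < K"
  shows "(\<Sum>i<K. c i *\<^sub>R outer (a i) (b i)) *v b j = c j *\<^sub>R a j"
proof -
  have "(\<Sum>i<K. c i *\<^sub>R outer (a i) (b i)) *v b j = (\<Sum>i<K. if i = j then c j *\<^sub>R a j else 0)"
    unfolding weighted_outer_sum_mult_vector using orthonormal_seqD[OF b _ j] by (intro sum.cong) auto
  then show ?thesis using j by simp
qed

lemma eigenbasis_expansion:
  fixes M :: "real^'a^'a" and w :: "nat \<Rightarrow> real^'a"
  assumes w_id: "(\<Sum>j<K. outer (w j) (w j)) = mat 1" and eig: "\<And>j. j < K \<Longrightarrow> M *v w j = \<mu> j *\<^sub>R w j"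
  shows "M = (\<Sum>j<K. \<mu> j *\<^sub>R outer (w j) (w j))"
proof (rule matrix_eq[THEN iffD2], rule allI)
  fix x
  have "M *v x = M *v (\<Sum>j<K. (w j \<bullet> x) *\<^sub>R w j)"
    using resolution_of_identity_expansion[OF w_id, of x] by metis
  also have "\<dots> = (\<Sum>j<K. \<mu> j *\<^sub>R outer (w j) (w j)) *v x"
    unfolding matrix_vector_mult_sum matrix_vector_mult_scaleR weighted_outer_sum_mult_vector
    using eig by (intro sum.cong) auto
  finally show "M *v x = (\<Sum>j<K. \<mu> j *\<^sub>R outer (w j) (w j)) *v x" .
qed

lemma inner_self_weighted_outer_orthonormal:
  fixes u :: "nat \<Rightarrow> real^'a"
  assumes u: "orthonormal_seq u K"
  shows "(\<Sum>i<K. c i *\<^sub>R outer (u i) (u i)) \<bullet> (\<Sum>i<K. c i *\<^sub>R outer (u i) (u i)) = (\<Sum>i<K. (c i)\<^sup>2)"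
proof -
  define X where "X = (\<Sum>i<K. c i *\<^sub>R outer (u i) (u i))"
  have "X \<bullet> X = (\<Sum>i<K. c i * (u i \<bullet> (X *v u i)))"
    by (subst (2) X_def) (rule inner_weighted_outer_sum)
  also have "\<dots> = (\<Sum>i<K. (c i)\<^sup>2)"
    using weighted_outer_sum_mult_orthonormal[OF u, where a = u] orthonormal_seqD[OF u]
    unfolding X_def by (intro sum.cong) (auto simp: power2_eq_square)
  finally show ?thesis unfolding X_def .
qed

lemma inner_gram_transpose_parseval:
  fixes Y :: "real^'r^'n" and w :: "nat \<Rightarrow> real^'r"
  assumes w_id: "(\<Sum>j<CARD('r). outer (w j) (w j)) = mat 1"
  shows "x \<bullet> ((Y ** transpose Y) *v x) = (\<Sum>j<CARD('r). (x \<bullet> (Y *v w j))\<^sup>2)"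
proof -
  have "x \<bullet> ((Y ** transpose Y) *v x) = (transpose Y *v x) \<bullet> (transpose Y *v x)"
    using inner_gram_mult_vector[of x "transpose Y"] by simp
  also have "\<dots> = (\<Sum>j<CARD('r). (w j \<bullet> (transpose Y *v x))\<^sup>2)"
    by (rule resolution_of_identity_parseval[OF w_id])
  also have "\<dots> = (\<Sum>j<CARD('r). (x \<bullet> (Y *v w j))\<^sup>2)"
    by (intro sum.cong refl) (simp only: inner_transpose_mult_vector inner_commute)
  finally show ?thesis .
qed

lemma objective_eigen_expansion:
  fixes A :: "real^'n^'n" and B :: "real^'r^'r" and Y :: "real^'r^'n"
    and s d \<mu> :: "nat \<Rightarrow> real" and u :: "nat \<Rightarrow> real^'n" and v w :: "nat \<Rightarrow> real^'r"
  assumes A_eig: "A = (\<Sum>i<CARD('n). s i *\<^sub>R outer (u i) (u i))" and u: "orthonormal_seq u CARD('n)"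
    and B_eig: "B = (\<Sum>k<CARD('r). d k *\<^sub>R outer (v k) (v k))"
    and w: "orthonormal_seq w CARD('r)" and w_id: "(\<Sum>j<CARD('r). outer (w j) (w j)) = mat 1"
    and eig: "\<And>j. j < CARD('r) \<Longrightarrow> (transpose Y ** Y) *v w j = \<mu> j *\<^sub>R w j"
  shows "(norm (A - Y ** transpose Y))\<^sup>2 + 2 * (B \<bullet> (transpose Y ** Y))
    = (\<Sum>i<CARD('n). (s i)\<^sup>2) + (\<Sum>j<CARD('r). (\<mu> j)\<^sup>2
        - 2 * (\<Sum>i<CARD('n). s i * (u i \<bullet> (Y *v w j))\<^sup>2)
        + 2 * \<mu> j * (\<Sum>k<CARD('r). d k * (v k \<bullet> w j)\<^sup>2))"
proof -
  define N where "N = CARD('n)"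
  define R where "R = CARD('r)"
  define P where "P = Y ** transpose Y"
  define M where "M = transpose Y ** Y"
  have M_eig: "M = (\<Sum>j<R. \<mu> j *\<^sub>R outer (w j) (w j))"
    unfolding M_def R_def using eigenbasis_expansion[OF w_id] eig by blast
  have AA: "A \<bullet> A = (\<Sum>i<N. (s i)\<^sup>2)"
    unfolding A_eig N_def by (rule inner_self_weighted_outer_orthonormal[OF u])
  have PP: "P \<bullet> P = (\<Sum>j<R. (\<mu> j)\<^sup>2)"
    unfolding P_def inner_gram_self M_def[symmetric] M_eig R_def
    by (rule inner_self_weighted_outer_orthonormal[OF w])
  have "A \<bullet> P = (\<Sum>i<N. s i * (u i \<bullet> (P *v u i)))"
    unfolding inner_commute[of A P] by (subst A_eig) (simp add: inner_weighted_outer_sum N_def)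
  also have "\<dots> = (\<Sum>i<N. s i * (\<Sum>j<R. (u i \<bullet> (Y *v w j))\<^sup>2))"
    unfolding P_def inner_gram_transpose_parseval[OF w_id] R_def ..
  finally have AP: "A \<bullet> P = (\<Sum>j<R. \<Sum>i<N. s i * (u i \<bullet> (Y *v w j))\<^sup>2)"
    by (simp add: sum_distrib_left sum.swap[of _ "{..<R}"])
  have BM: "B \<bullet> M = (\<Sum>j<R. \<mu> j * (\<Sum>k<R. d k * (v k \<bullet> w j)\<^sup>2))"
    unfolding M_eig inner_weighted_outer_sum B_eig inner_weighted_outer_sum_quadratic R_def ..
  have "(norm (A - P))\<^sup>2 = A \<bullet> A - 2 * (A \<bullet> P) + P \<bullet> P"
    by (simp add: power2_norm_eq_inner inner_diff_left inner_diff_right inner_commute)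
  then show ?thesis
    unfolding P_def[symmetric] M_def[symmetric] N_def[symmetric] R_def[symmetric] AA AP PP BM
    by (simp add: sum.distrib sum_subtractf sum_distrib_left mult.assoc)
qed

lemma gram_eigenvector_images:
  fixes Y :: "real^'r^'n"
  assumes w: "orthonormal_seq w K" and eig: "\<And>j. j < K \<Longrightarrow> (transpose Y ** Y) *v w j = \<mu> j *\<^sub>R w j"
    and "j < K" "l < K"
  shows "(Y *v w j) \<bullet> (Y *v w l) = (if j = l then \<mu> j else 0)"
  using inner_gram_mult_vector[of "w j" Y "w l"] eig[of l] orthonormal_seqD[OF w] assms(3,4) by auto

lemma gram_eigenbasis_weights:
  fixes Y :: "real^'r^'n" and u :: "nat \<Rightarrow> real^'n" and v w :: "nat \<Rightarrow> real^'r"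
  assumes u_id: "(\<Sum>i<CARD('n). outer (u i) (u i)) = mat 1"
    and v_id: "(\<Sum>k<CARD('r). outer (v k) (v k)) = mat 1"
    and w: "orthonormal_seq w CARD('r)" and w_id: "(\<Sum>j<CARD('r). outer (w j) (w j)) = mat 1"
    and eig: "\<And>j. j < CARD('r) \<Longrightarrow> (transpose Y ** Y) *v w j = \<mu> j *\<^sub>R w j"
  shows "\<And>j. j < CARD('r) \<Longrightarrow> 0 \<le> \<mu> j"
    and "\<And>j. j < CARD('r) \<Longrightarrow> (\<Sum>i<CARD('n). (u i \<bullet> (Y *v w j))\<^sup>2) = \<mu> j"
    and "\<And>i. i < CARD('n) \<Longrightarrow> (\<Sum>j<CARD('r). (u i \<bullet> (Y *v w j))\<^sup>2 / \<mu> j) \<le> 1"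
    and "\<And>j. j < CARD('r) \<Longrightarrow> (\<Sum>k<CARD('r). (v k \<bullet> w j)\<^sup>2) = 1"
    and "\<And>k. k < CARD('r) \<Longrightarrow> (\<Sum>j<CARD('r). (v k \<bullet> w j)\<^sup>2) \<le> 1"
proof -
  have images: "(Y *v w j) \<bullet> (Y *v w l) = (if j = l then \<mu> j else 0)"
    if "j < CARD('r)" "l < CARD('r)" for j l
    using gram_eigenvector_images[OF w eig that] .
  show "0 \<le> \<mu> j" if "j < CARD('r)" for j
    using images[OF that that] by (metis inner_ge_zero)
  show "(\<Sum>i<CARD('n). (u i \<bullet> (Y *v w j))\<^sup>2) = \<mu> j" if "j < CARD('r)" for j
    using resolution_of_identity_parseval[OF u_id, of "Y *v w j"] images[OF that that] by simp
  show "(\<Sum>j<CARD('r). (u i \<bullet> (Y *v w j))\<^sup>2 / \<mu> j) \<le> 1" if "i < CARD('n)" for i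
  proof -
    have "(\<Sum>j<CARD('r). (u i \<bullet> (Y *v w j))\<^sup>2 / \<mu> j)
        = (\<Sum>j<CARD('r). (u i \<bullet> (Y *v w j))\<^sup>2 / ((Y *v w j) \<bullet> (Y *v w j)))"
      using images by (intro sum.cong) auto
    also have "\<dots> \<le> u i \<bullet> u i" using images by (intro bessel_inequality) auto
    finally show ?thesis
      using orthonormal_seqD[OF resolution_of_identity_orthonormal[OF u_id] that that] by simp
  qed
  show "(\<Sum>k<CARD('r). (v k \<bullet> w j)\<^sup>2) = 1" if "j < CARD('r)" for j
    using resolution_of_identity_parseval[OF v_id, of "w j"] orthonormal_seqD[OF w that that] by simp
  show "(\<Sum>j<CARD('r). (v k \<bullet> w j)\<^sup>2) \<le> 1" if "k < CARD('r)" for k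
    using resolution_of_identity_parseval[OF w_id, of "v k"]
      orthonormal_seqD[OF resolution_of_identity_orthonormal[OF v_id] that that]
    by (simp add: inner_commute)
qed

lemma objective_lower_bound:
  fixes A :: "real^'n^'n" and B :: "real^'r^'r" and Y :: "real^'r^'n"
    and s d :: "nat \<Rightarrow> real" and u :: "nat \<Rightarrow> real^'n" and v :: "nat \<Rightarrow> real^'r"
  assumes rn: "CARD('r) \<le> CARD('n)"
    and A_eig: "A = (\<Sum>i<CARD('n). s i *\<^sub>R outer (u i) (u i))"
    and u_id: "(\<Sum>i<CARD('n). outer (u i) (u i)) = mat 1"
    and s_dec: "\<And>i j. i \<le> j \<Longrightarrow> j < CARD('n) \<Longrightarrow> s j \<le> s i"
    and s_nonneg: "\<And>i. i < CARD('n) \<Longrightarrow> 0 \<le> s i"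
    and B_eig: "B = (\<Sum>k<CARD('r). d k *\<^sub>R outer (v k) (v k))"
    and v_id: "(\<Sum>k<CARD('r). outer (v k) (v k)) = mat 1"
    and d_inc: "\<And>i j. i \<le> j \<Longrightarrow> j < CARD('r) \<Longrightarrow> d i \<le> d j"
  shows "(\<Sum>i<CARD('n). (s i)\<^sup>2) - (\<Sum>i<CARD('r). (pos_part (s i - d i))\<^sup>2)
    \<le> (norm (A - Y ** transpose Y))\<^sup>2 + 2 * (B \<bullet> (transpose Y ** Y))"
proof -
  interpret sorted_spectra "CARD('n)" "CARD('r)" s d
    using rn s_dec s_nonneg d_inc by unfold_locales auto
  obtain a b where a: "\<And>i. 0 \<le> a i" and b: "\<And>k. k < CARD('r) \<Longrightarrow> 0 \<le> b k"
    and ab: "\<And>i k. i < CARD('n) \<Longrightarrow> k < CARD('r) \<Longrightarrow> (pos_part (s i - d k))\<^sup>2 \<le> a i + b k"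
    and ab_sum: "(\<Sum>i<CARD('n). a i) + (\<Sum>k<CARD('r). b k) = (\<Sum>i<CARD('r). (pos_part (s i - d i))\<^sup>2)"
    using dual_certificate by blast
  have "transpose (transpose Y ** Y) = transpose Y ** Y" by (simp add: matrix_transpose_mul)
  then obtain w \<mu> where w: "orthonormal_seq w CARD('r)" and w_id: "(\<Sum>j<CARD('r). outer (w j) (w j)) = mat 1"
    and eig: "\<And>j. j < CARD('r) \<Longrightarrow> (transpose Y ** Y) *v w j = \<mu> j *\<^sub>R w j"
    using symmetric_spectral_decomposition by blast
  note weights = gram_eigenbasis_weights[OF u_id v_id w w_id eig]
  have "- (\<Sum>i<CARD('r). (pos_part (s i - d i))\<^sup>2) \<le> (\<Sum>j<CARD('r). (\<mu> j)\<^sup>2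
      - 2 * (\<Sum>i<CARD('n). s i * (u i \<bullet> (Y *v w j))\<^sup>2)
      + 2 * \<mu> j * (\<Sum>k<CARD('r). d k * (v k \<bullet> w j)\<^sup>2))"
    unfolding ab_sum[symmetric]
    by (rule assignment_lower_bound[where p = "\<lambda>i j. (u i \<bullet> (Y *v w j))\<^sup>2" and q = "\<lambda>k j. (v k \<bullet> w j)\<^sup>2"])
       (use weights a b ab in auto)
  then show ?thesis
    using objective_eigen_expansion[OF A_eig resolution_of_identity_orthonormal[OF u_id] B_eig w w_id eig]
    by simp
qed

lemma outer_sum_singular_vectors:
  fixes a :: "nat \<Rightarrow> real^'n" and b :: "nat \<Rightarrow> real^'r"
  assumes a: "orthonormal_seq a K" and b: "orthonormal_seq b K" and j: "j < K"
    and Y_def: "Y = (\<Sum>i<K. \<sigma> i *\<^sub>R outer (a i) (b i))"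
  shows "Y *v b j = \<sigma> j *\<^sub>R a j" and "(transpose Y ** Y) *v b j = (\<sigma> j)\<^sup>2 *\<^sub>R b j"
proof -
  show Yb: "Y *v b j = \<sigma> j *\<^sub>R a j"
    unfolding Y_def by (rule weighted_outer_sum_mult_orthonormal[OF b j])
  have "transpose Y = (\<Sum>i<K. \<sigma> i *\<^sub>R outer (b i) (a i))"
    unfolding Y_def by (simp add: transpose_sum transpose_scalar transpose_outer)
  then have "transpose Y *v a j = \<sigma> j *\<^sub>R b j"
    using weighted_outer_sum_mult_orthonormal[OF a j] by simp
  then show "(transpose Y ** Y) *v b j = (\<sigma> j)\<^sup>2 *\<^sub>R b j"
    using Yb by (simp add: matrix_vector_mul_assoc[symmetric] matrix_vector_mult_scaleR power2_eq_square)
qed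

lemma objective_at_minimizer:
  fixes A :: "real^'n^'n" and B :: "real^'r^'r" and Y :: "real^'r^'n"
    and s d :: "nat \<Rightarrow> real" and u :: "nat \<Rightarrow> real^'n" and v :: "nat \<Rightarrow> real^'r"
  assumes rn: "CARD('r) \<le> CARD('n)"
    and A_eig: "A = (\<Sum>i<CARD('n). s i *\<^sub>R outer (u i) (u i))"
    and u_id: "(\<Sum>i<CARD('n). outer (u i) (u i)) = mat 1"
    and B_eig: "B = (\<Sum>k<CARD('r). d k *\<^sub>R outer (v k) (v k))"
    and v_id: "(\<Sum>k<CARD('r). outer (v k) (v k)) = mat 1"
    and Y_def: "Y = (\<Sum>i<CARD('r). sqrt (pos_part (s i - d i)) *\<^sub>R outer (u i) (v i))"
  shows "(norm (A - Y ** transpose Y))\<^sup>2 + 2 * (B \<bullet> (transpose Y ** Y))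
    = (\<Sum>i<CARD('n). (s i)\<^sup>2) - (\<Sum>i<CARD('r). (pos_part (s i - d i))\<^sup>2)"
proof -
  define N where "N = CARD('n)"
  define R where "R = CARD('r)"
  define c where "c i = pos_part (s i - d i)" for i
  have u: "orthonormal_seq u N" using resolution_of_identity_orthonormal[OF u_id] unfolding N_def .
  have v: "orthonormal_seq v R" using resolution_of_identity_orthonormal[OF v_id] unfolding R_def .
  have sqrt_c: "(sqrt (c i))\<^sup>2 = c i" for i unfolding c_def pos_part_def by simp
  note singular = outer_sum_singular_vectors[OF orthonormal_seq_mono[OF u] v _ Y_def[folded c_def R_def]]
  have Yv: "Y *v v j = sqrt (c j) *\<^sub>R u j" and eig: "(transpose Y ** Y) *v v j = c j *\<^sub>R v j"
    if "j < R" for j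
    using singular[OF _ that] rn sqrt_c unfolding N_def R_def by auto
  have direction: "(c j)\<^sup>2 - 2 * (\<Sum>i<N. s i * (u i \<bullet> (Y *v v j))\<^sup>2)
      + 2 * c j * (\<Sum>k<R. d k * (v k \<bullet> v j)\<^sup>2) = - (c j)\<^sup>2" if j: "j < R" for j
  proof -
    have "j < N" using j rn unfolding N_def R_def by simp
    have "(\<Sum>i<N. s i * (u i \<bullet> (Y *v v j))\<^sup>2) = (\<Sum>i<N. if i = j then s j * c j else 0)"
      using Yv[OF j] sqrt_c orthonormal_seqD[OF u _ \<open>j < N\<close>]
      by (intro sum.cong) (auto simp: power_mult_distrib)
    moreover have "(\<Sum>k<R. d k * (v k \<bullet> v j)\<^sup>2) = (\<Sum>k<R. if k = j then d j else 0)"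
      using orthonormal_seqD[OF v _ j] by (intro sum.cong) auto
    moreover have "(c j)\<^sup>2 - 2 * (s j * c j) + 2 * c j * d j = - (c j)\<^sup>2"
      unfolding c_def pos_part_def by (simp add: max_def power2_eq_square algebra_simps)
    ultimately show ?thesis using j \<open>j < N\<close> by simp
  qed
  have "(norm (A - Y ** transpose Y))\<^sup>2 + 2 * (B \<bullet> (transpose Y ** Y))
      = (\<Sum>i<N. (s i)\<^sup>2) + (\<Sum>j<R. (c j)\<^sup>2 - 2 * (\<Sum>i<N. s i * (u i \<bullet> (Y *v v j))\<^sup>2)
        + 2 * c j * (\<Sum>k<R. d k * (v k \<bullet> v j)\<^sup>2))"
    using objective_eigen_expansion[OF A_eig _ B_eig, of v] u v v_id eig unfolding N_def R_def by blast
  also have "\<dots> = (\<Sum>i<N. (s i)\<^sup>2) + (\<Sum>j<R. - (c j)\<^sup>2)"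
    by (intro arg_cong2[where f = "(+)"] sum.cong refl) (rule direction, simp)
  finally show ?thesis unfolding N_def R_def c_def by (simp add: sum_negf)
qed

theorem theorem19:
  fixes A :: "real ^ 'n ^ 'n" and B :: "real ^ 'r ^ 'r"
    and s :: "nat \<Rightarrow> real" and u :: "nat \<Rightarrow> real ^ 'n"
    and d :: "nat \<Rightarrow> real" and v :: "nat \<Rightarrow> real ^ 'r"
  assumes rn: "CARD('r) \<le> CARD('n)"
    and A_psd: "sym_psd A" and B_psd: "sym_psd B"
    and A_eig: "A = (\<Sum>i<CARD('n). s i *\<^sub>R outer (u i) (u i))"
    and u_id: "(\<Sum>i<CARD('n). outer (u i) (u i)) = mat 1"
    and s_dec: "\<And>i j. i \<le> j \<Longrightarrow> j < CARD('n) \<Longrightarrow> s j \<le> s i"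
    and s_nonneg: "\<And>i. i < CARD('n) \<Longrightarrow> 0 \<le> s i"
    and B_eig: "B = (\<Sum>i<CARD('r). d i *\<^sub>R outer (v i) (v i))"
    and v_id: "(\<Sum>i<CARD('r). outer (v i) (v i)) = mat 1"
    and d_inc: "\<And>i j. i \<le> j \<Longrightarrow> j < CARD('r) \<Longrightarrow> d i \<le> d j"
    and d_nonneg: "\<And>i. i < CARD('r) \<Longrightarrow> 0 \<le> d i"
  shows "(\<forall>Y :: real ^ 'r ^ 'n.
            (\<Sum>i<CARD('n). (s i)\<^sup>2) - (\<Sum>i<CARD('r). (pos_part (s i - d i))\<^sup>2)
            \<le> (frob_norm (A - Y ** transpose Y))\<^sup>2 + 2 * frob_inner B (transpose Y ** Y))
       \<and> (let Ystar = (\<Sum>i<CARD('r). sqrt (pos_part (s i - d i)) *\<^sub>R outer (u i) (v i))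
          in (frob_norm (A - Ystar ** transpose Ystar))\<^sup>2 + 2 * frob_inner B (transpose Ystar ** Ystar)
             = (\<Sum>i<CARD('n). (s i)\<^sup>2) - (\<Sum>i<CARD('r). (pos_part (s i - d i))\<^sup>2))"
proof -
  have "(\<Sum>i<CARD('n). (s i)\<^sup>2) - (\<Sum>i<CARD('r). (pos_part (s i - d i))\<^sup>2)
      \<le> (frob_norm (A - Y ** transpose Y))\<^sup>2 + 2 * frob_inner B (transpose Y ** Y)"
    for Y :: "real ^ 'r ^ 'n"
    unfolding frob_norm_eq_norm frob_inner_eq_inner
    by (rule objective_lower_bound[OF rn A_eig u_id s_dec s_nonneg B_eig v_id d_inc])
  moreover have "let Ystar = (\<Sum>i<CARD('r). sqrt (pos_part (s i - d i)) *\<^sub>R outer (u i) (v i))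
      in (frob_norm (A - Ystar ** transpose Ystar))\<^sup>2 + 2 * frob_inner B (transpose Ystar ** Ystar)
         = (\<Sum>i<CARD('n). (s i)\<^sup>2) - (\<Sum>i<CARD('r). (pos_part (s i - d i))\<^sup>2)"
    unfolding Let_def frob_norm_eq_norm frob_inner_eq_inner
    by (rule objective_at_minimizer[OF rn A_eig u_id B_eig v_id refl])
  ultimately show ?thesis by blast
qed

end
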